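(* Let $(A,\mu,\alpha,\beta)$ be a BiHom-associative algebra (with $\mu(a\otimes b)=a\cdot b$) and let $r=\sum_i x_i\otimes y_i\in A\otimes A$ satisfy $(\alpha\otimes\alpha)(r)=r=(\beta\otimes\beta)(r)$. Define $\Delta_r:A\to A\otimes A$ by $\Delta_r(a)=\sum_i\alpha(x_i)\otimes y_i\cdot a-\sum_i a\cdot x_i\otimes\beta(y_i)$. Then $(\alpha\otimes\alpha)\circ\Delta_r=\Delta_r\circ\alpha$, $(\beta\otimes\beta)\circ\Delta_r=\Delta_r\circ\beta$, and, writing $\Delta_r(a)=a_1\otimes a_2$, for all $a,b\in A$: \[ \Delta_r(a\cdot b)=\alpha(a)\cdot b_1\otimes\beta(b_2)+\alpha(a_1)\otimes a_2\cdot\beta(b). \]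
   Context: Work over a field. A BiHom-associative algebra is a 4-tuple $(A,\mu,\alpha,\beta)$ with $\alpha,\beta:A\to A$ commuting linear maps, multiplicative for $\mu$, and $\alpha(x)\cdot(y\cdot z)=(x\cdot y)\cdot\beta(z)$ for all $x,y,z$. *)

theory Defs
  imports Complex_Main
begin

definition bilinear_map ::
  "('k::field \<Rightarrow> 'a::ab_group_add \<Rightarrow> 'a) \<Rightarrow> ('k \<Rightarrow> 'w::ab_group_add \<Rightarrow> 'w) \<Rightarrow> ('a \<Rightarrow> 'a \<Rightarrow> 'w) \<Rightarrow> bool" where
  "bilinear_map s sw B \<longleftrightarrow> (\<forall>x. Vector_Spaces.linear s sw (B x)) \<and> (\<forall>y. Vector_Spaces.linear s sw (\<lambda>x. B x y))"

text \<open>Elements of A \<otimes> A are written as formal sums, i.e. lists [(x_1,y_1),...] standing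
  for sum_i x_i \<otimes> y_i.  Two such sums are equal in A \<otimes> A iff they have the same image
  under every bilinear map out of A \<times> A (universal property of the tensor product);
  the target space type 'w is an explicit parameter.\<close>

definition tensor_eq ::
  "'w::ab_group_add itself \<Rightarrow> ('k::field \<Rightarrow> 'a::ab_group_add \<Rightarrow> 'a) \<Rightarrow> ('a \<times> 'a) list \<Rightarrow> ('a \<times> 'a) list \<Rightarrow> bool" where
  "tensor_eq _ s xs ys \<longleftrightarrow>
     (\<forall>(sw :: 'k \<Rightarrow> 'w \<Rightarrow> 'w) B. vector_space sw \<and> bilinear_map s sw B \<longrightarrow>
        sum_list (map (\<lambda>(x,y). B x y) xs) = sum_list (map (\<lambda>(x,y). B x y) ys))"

definition bihom_assoc_algebra ::
  "('k::field \<Rightarrow> 'a::ab_group_add \<Rightarrow> 'a) \<Rightarrow> ('a \<Rightarrow> 'a \<Rightarrow> 'a) \<Rightarrow> ('a \<Rightarrow> 'a) \<Rightarrow> ('a \<Rightarrow> 'a) \<Rightarrow> bool" where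
  "bihom_assoc_algebra s mu \<alpha> \<beta> \<longleftrightarrow>
     vector_space s \<and> bilinear_map s s mu \<and> Vector_Spaces.linear s s \<alpha> \<and> Vector_Spaces.linear s s \<beta> \<and>
     \<alpha> \<circ> \<beta> = \<beta> \<circ> \<alpha> \<and>
     (\<forall>x y. \<alpha> (mu x y) = mu (\<alpha> x) (\<alpha> y)) \<and>
     (\<forall>x y. \<beta> (mu x y) = mu (\<beta> x) (\<beta> y)) \<and>
     (\<forall>x y z. mu (\<alpha> x) (mu y z) = mu (mu x y) (\<beta> z))"

definition tmap :: "('a \<Rightarrow> 'a) \<Rightarrow> ('a \<Rightarrow> 'a) \<Rightarrow> ('a \<times> 'a) list \<Rightarrow> ('a \<times> 'a) list" where
  "tmap f g t = map (\<lambda>(x,y). (f x, g y)) t"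

definition Delta_r :: "('a::ab_group_add \<Rightarrow> 'a \<Rightarrow> 'a) \<Rightarrow> ('a \<Rightarrow> 'a) \<Rightarrow> ('a \<Rightarrow> 'a) \<Rightarrow> ('a \<times> 'a) list \<Rightarrow> 'a \<Rightarrow> ('a \<times> 'a) list" where
  "Delta_r mu \<alpha> \<beta> r a =
     map (\<lambda>(x,y). (\<alpha> x, mu y a)) r @ map (\<lambda>(x,y). (- mu a x, \<beta> y)) r"

end

theory Submission
  imports Defs
begin

text \<open>It suffices to compare the images of both sides under an arbitrary bilinear
  map \<open>B\<close>. Applying \<open>B\<close> to \<open>\<Delta>\<^sub>r\<close> produces sums over \<open>r\<close> of bilinear expressions in
  \<open>x\<^sub>i, y\<^sub>i\<close>; the invariance of \<open>r\<close> under \<open>\<alpha> \<otimes> \<alpha>\<close> and \<open>\<beta> \<otimes> \<beta>\<close> lets us strip \<open>\<alpha>\<close> or \<open>\<beta>\<close>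
  from both legs of such a sum. For \<open>\<Delta>\<^sub>r(a b)\<close>, two of the four terms on the right cancel by
  multiplicativity, and BiHom-associativity followed by this invariance matches the
  remaining two with the two terms of \<open>\<Delta>\<^sub>r(a b)\<close>.\<close>

definition tensor_eval :: "('a \<Rightarrow> 'a \<Rightarrow> 'w::ab_group_add) \<Rightarrow> ('a \<times> 'a) list \<Rightarrow> 'w" where
  "tensor_eval B t = sum_list (map (\<lambda>(x, y). B x y) t)"

lemma tensor_eqI:
  assumes "\<And>(sw :: 'k \<Rightarrow> 'w \<Rightarrow> 'w) B. vector_space sw \<Longrightarrow> bilinear_map s sw B \<Longrightarrow>
    tensor_eval B xs = tensor_eval B ys"
  shows "tensor_eq TYPE('w::ab_group_add) (s :: 'k::field \<Rightarrow> 'a::ab_group_add \<Rightarrow> 'a) xs ys"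
  using assms unfolding tensor_eq_def tensor_eval_def by blast

lemma tensor_eval_append [simp]: "tensor_eval B (xs @ ys) = tensor_eval B xs + tensor_eval B ys"
  by (simp add: tensor_eval_def)

lemma tensor_eval_map_pair [simp]:
  "tensor_eval B (map (\<lambda>(x, y). (f x, g y)) t) = tensor_eval (\<lambda>x y. B (f x) (g y)) t"
  by (induction t) (auto simp: tensor_eval_def)

lemma tensor_eval_tmap: "tensor_eval B (tmap f g t) = tensor_eval (\<lambda>x y. B (f x) (g y)) t"
  by (simp add: tmap_def)

lemma linear_uminus: "Vector_Spaces.linear s1 s2 f \<Longrightarrow> f (- x) = - f x"
  unfolding Vector_Spaces.linear_def by (metis module_hom.neg)

lemma bilinear_map_uminus_left: "bilinear_map s sw B \<Longrightarrow> B (- u) v = - B u v"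
  unfolding bilinear_map_def by (metis linear_uminus)

lemma bilinear_map_compose:
  assumes "bilinear_map s sw B" "Vector_Spaces.linear s s f" "Vector_Spaces.linear s s g"
  shows "bilinear_map s sw (\<lambda>x y. B (f x) (g y))"
  using assms Vector_Spaces.linear_compose[of s s f sw] Vector_Spaces.linear_compose[of s s g sw]
  unfolding bilinear_map_def by (auto simp: o_def)

lemma tensor_eval_Delta_r:
  assumes "bilinear_map s sw B"
  shows "tensor_eval B (Delta_r mu \<alpha> \<beta> r a) =
    tensor_eval (\<lambda>x y. B (\<alpha> x) (mu y a)) r - tensor_eval (\<lambda>x y. B (mu a x) (\<beta> y)) r"
  using bilinear_map_uminus_left[OF assms]
  by (induction r) (auto simp: Delta_r_def tensor_eval_def)

lemma tensor_eval_invariant: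
  assumes "tensor_eq TYPE('w::ab_group_add) s (tmap f f r) r"
    and "vector_space (sw :: 'k::field \<Rightarrow> 'w \<Rightarrow> 'w)" "bilinear_map s sw B"
  shows "tensor_eval (\<lambda>x y. B (f x) (f y)) r = tensor_eval B r"
  using assms unfolding tensor_eq_def tensor_eval_def[symmetric] by (simp add: tensor_eval_tmap)

lemma bihom_assoc_algebraD:
  assumes "bihom_assoc_algebra s mu \<alpha> \<beta>"
  shows "Vector_Spaces.linear s s \<alpha>" "Vector_Spaces.linear s s \<beta>"
    and "Vector_Spaces.linear s s (\<lambda>x. mu c x)" "Vector_Spaces.linear s s (\<lambda>x. mu x c)"
    and "\<alpha> (\<beta> x) = \<beta> (\<alpha> x)"
    and "\<alpha> (mu x y) = mu (\<alpha> x) (\<alpha> y)" "\<beta> (mu x y) = mu (\<beta> x) (\<beta> y)"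
    and "mu (\<alpha> x) (mu y z) = mu (mu x y) (\<beta> z)"
  using assms unfolding bihom_assoc_algebra_def bilinear_map_def by (auto simp: fun_eq_iff)

lemma tmap_Delta_r:
  fixes s :: "'k::field \<Rightarrow> 'a::ab_group_add \<Rightarrow> 'a"
  assumes alg: "bihom_assoc_algebra s mu \<alpha> \<beta>"
    and lin: "Vector_Spaces.linear s s \<gamma>"
    and mult: "\<And>x y. \<gamma> (mu x y) = mu (\<gamma> x) (\<gamma> y)"
    and comm_\<alpha>: "\<And>x. \<gamma> (\<alpha> x) = \<alpha> (\<gamma> x)" and comm_\<beta>: "\<And>x. \<gamma> (\<beta> x) = \<beta> (\<gamma> x)"
    and inv: "tensor_eq TYPE('w::ab_group_add) s (tmap \<gamma> \<gamma> r) r"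
  shows "tensor_eq TYPE('w) s (tmap \<gamma> \<gamma> (Delta_r mu \<alpha> \<beta> r a)) (Delta_r mu \<alpha> \<beta> r (\<gamma> a))"
proof (rule tensor_eqI)
  fix sw :: "'k \<Rightarrow> 'w \<Rightarrow> 'w" and B
  assume vs: "vector_space sw" and B: "bilinear_map s sw B"
  note lin_alg = bihom_assoc_algebraD(1-4)[OF alg]
  have left: "tensor_eval (\<lambda>x y. B (\<alpha> (\<gamma> x)) (mu (\<gamma> y) (\<gamma> a))) r =
      tensor_eval (\<lambda>x y. B (\<alpha> x) (mu y (\<gamma> a))) r"
    using tensor_eval_invariant[OF inv vs bilinear_map_compose[OF B lin_alg(1,4)]] by simp
  have right: "tensor_eval (\<lambda>x y. B (mu (\<gamma> a) (\<gamma> x)) (\<beta> (\<gamma> y))) r =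
      tensor_eval (\<lambda>x y. B (mu (\<gamma> a) x) (\<beta> y)) r"
    using tensor_eval_invariant[OF inv vs bilinear_map_compose[OF B lin_alg(3,2)]] by simp
  have "tensor_eval B (tmap \<gamma> \<gamma> (Delta_r mu \<alpha> \<beta> r a)) =
      tensor_eval (\<lambda>x y. B (\<alpha> (\<gamma> x)) (mu (\<gamma> y) (\<gamma> a))) r -
      tensor_eval (\<lambda>x y. B (mu (\<gamma> a) (\<gamma> x)) (\<beta> (\<gamma> y))) r"
    using bilinear_map_compose[OF B lin lin]
    by (simp add: tensor_eval_tmap tensor_eval_Delta_r mult comm_\<alpha> comm_\<beta>)
  also have "\<dots> = tensor_eval B (Delta_r mu \<alpha> \<beta> r (\<gamma> a))"
    using left right tensor_eval_Delta_r[OF B] by simp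
  finally show "tensor_eval B (tmap \<gamma> \<gamma> (Delta_r mu \<alpha> \<beta> r a)) =
      tensor_eval B (Delta_r mu \<alpha> \<beta> r (\<gamma> a))" .
qed

lemma Delta_r_mult:
  fixes s :: "'k::field \<Rightarrow> 'a::ab_group_add \<Rightarrow> 'a"
  assumes alg: "bihom_assoc_algebra s mu \<alpha> \<beta>"
    and inv_\<alpha>: "tensor_eq TYPE('w::ab_group_add) s (tmap \<alpha> \<alpha> r) r"
    and inv_\<beta>: "tensor_eq TYPE('w) s (tmap \<beta> \<beta> r) r"
  shows "tensor_eq TYPE('w) s (Delta_r mu \<alpha> \<beta> r (mu a b))
    (map (\<lambda>(b1, b2). (mu (\<alpha> a) b1, \<beta> b2)) (Delta_r mu \<alpha> \<beta> r b) @
     map (\<lambda>(a1, a2). (\<alpha> a1, mu a2 (\<beta> b))) (Delta_r mu \<alpha> \<beta> r a))"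
proof (rule tensor_eqI)
  fix sw :: "'k \<Rightarrow> 'w \<Rightarrow> 'w" and B
  assume vs: "vector_space sw" and B: "bilinear_map s sw B"
  note lin_alg = bihom_assoc_algebraD(1-4)[OF alg]
  note mult = bihom_assoc_algebraD(6,7)[OF alg]
  note assoc = bihom_assoc_algebraD(8)[OF alg]
  have left: "tensor_eval (\<lambda>x y. B (\<alpha> (\<alpha> x)) (mu (\<alpha> y) (mu a b))) r =
      tensor_eval (\<lambda>x y. B (\<alpha> x) (mu y (mu a b))) r"
    using tensor_eval_invariant[OF inv_\<alpha> vs bilinear_map_compose[OF B lin_alg(1,4)]] by simp
  have right: "tensor_eval (\<lambda>x y. B (mu (mu a b) (\<beta> x)) (\<beta> (\<beta> y))) r =
      tensor_eval (\<lambda>x y. B (mu (mu a b) x) (\<beta> y)) r"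
    using tensor_eval_invariant[OF inv_\<beta> vs bilinear_map_compose[OF B lin_alg(3,2)]] by simp
  have "tensor_eval B
      (map (\<lambda>(b1, b2). (mu (\<alpha> a) b1, \<beta> b2)) (Delta_r mu \<alpha> \<beta> r b) @
       map (\<lambda>(a1, a2). (\<alpha> a1, mu a2 (\<beta> b))) (Delta_r mu \<alpha> \<beta> r a)) =
      (tensor_eval (\<lambda>x y. B (mu (\<alpha> a) (\<alpha> x)) (mu (\<beta> y) (\<beta> b))) r -
       tensor_eval (\<lambda>x y. B (mu (\<alpha> a) (mu b x)) (\<beta> (\<beta> y))) r) +
      (tensor_eval (\<lambda>x y. B (\<alpha> (\<alpha> x)) (mu (mu y a) (\<beta> b))) r -
       tensor_eval (\<lambda>x y. B (mu (\<alpha> a) (\<alpha> x)) (mu (\<beta> y) (\<beta> b))) r)"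
    using tensor_eval_Delta_r[OF bilinear_map_compose[OF B lin_alg(3,2)]]
      tensor_eval_Delta_r[OF bilinear_map_compose[OF B lin_alg(1,4)]]
    by (simp add: mult)
  also have "\<dots> = tensor_eval (\<lambda>x y. B (\<alpha> (\<alpha> x)) (mu (\<alpha> y) (mu a b))) r -
      tensor_eval (\<lambda>x y. B (mu (mu a b) (\<beta> x)) (\<beta> (\<beta> y))) r"
    by (simp add: assoc)
  also have "\<dots> = tensor_eval B (Delta_r mu \<alpha> \<beta> r (mu a b))"
    using left right tensor_eval_Delta_r[OF B] by simp
  finally show "tensor_eval B (Delta_r mu \<alpha> \<beta> r (mu a b)) = tensor_eval B
      (map (\<lambda>(b1, b2). (mu (\<alpha> a) b1, \<beta> b2)) (Delta_r mu \<alpha> \<beta> r b) @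
       map (\<lambda>(a1, a2). (\<alpha> a1, mu a2 (\<beta> b))) (Delta_r mu \<alpha> \<beta> r a))" by simp
qed

theorem proposition5p2:
  fixes s :: "'k::field \<Rightarrow> 'a::ab_group_add \<Rightarrow> 'a"
    and mu :: "'a \<Rightarrow> 'a \<Rightarrow> 'a" and \<alpha> \<beta> :: "'a \<Rightarrow> 'a"
    and r :: "('a \<times> 'a) list"
  assumes "bihom_assoc_algebra s mu \<alpha> \<beta>"
    and "tensor_eq TYPE('w::ab_group_add) s (tmap \<alpha> \<alpha> r) r"
    and "tensor_eq TYPE('w) s (tmap \<beta> \<beta> r) r"
  shows "(\<forall>a. tensor_eq TYPE('w) s (tmap \<alpha> \<alpha> (Delta_r mu \<alpha> \<beta> r a)) (Delta_r mu \<alpha> \<beta> r (\<alpha> a))) \<and>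
         (\<forall>a. tensor_eq TYPE('w) s (tmap \<beta> \<beta> (Delta_r mu \<alpha> \<beta> r a)) (Delta_r mu \<alpha> \<beta> r (\<beta> a))) \<and>
         (\<forall>a b. tensor_eq TYPE('w) s (Delta_r mu \<alpha> \<beta> r (mu a b))
            (map (\<lambda>(b1,b2). (mu (\<alpha> a) b1, \<beta> b2)) (Delta_r mu \<alpha> \<beta> r b) @
             map (\<lambda>(a1,a2). (\<alpha> a1, mu a2 (\<beta> b))) (Delta_r mu \<alpha> \<beta> r a)))"
proof (intro conjI allI)
  note alg = bihom_assoc_algebraD[OF assms(1)]
  show "tensor_eq TYPE('w) s (tmap \<alpha> \<alpha> (Delta_r mu \<alpha> \<beta> r a)) (Delta_r mu \<alpha> \<beta> r (\<alpha> a))" for a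
    by (rule tmap_Delta_r[where \<gamma> = \<alpha>]) (use assms alg(1,5,6) in auto)
  show "tensor_eq TYPE('w) s (tmap \<beta> \<beta> (Delta_r mu \<alpha> \<beta> r a)) (Delta_r mu \<alpha> \<beta> r (\<beta> a))" for a
    by (rule tmap_Delta_r[where \<gamma> = \<beta>]) (use assms alg(2,5,7) in auto)
qed (rule Delta_r_mult[OF assms])

end
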